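(* Suppose there exists a decomposition $U_0,U_1,\ldots,U_d$ of $V$ which is split with respect to the orderings $E_0,\ldots,E_d$ and $E^*_0,\ldots,E^*_d$. Then for $0\le i\le d$: (i) $\sum_{h=0}^iU_h=\sum_{h=0}^iA^hE^*_0V$; (ii) $\sum_{h=0}^iU_h=\sum_{h=0}^iE^*_hV$; (iii) $\sum_{h=i}^dU_h=\sum_{h=0}^{d-i}A^{*h}E_dV$; (iv) $\sum_{h=i}^dU_h=\sum_{h=i}^dE_hV$; (v) $U_i=(E^*_0V+E^*_1V+\cdots+E^*_iV)\cap(E_iV+E_{i+1}V+\cdots+E_dV)$.
   Context: Let $\mathbb K$ be a field, $d\ge 0$ an integer, and $\mathcal A$ a $\mathbb K$-algebra isomorphic to $\mathrm{Mat}_{d+1}(\mathbb K)$, with identity $I$. An element of $\mathcal A$ is multiplicity-free if it has $d+1$ mutually distinct eigenvalues, all in $\mathbb K$; for such $A$ with eigenvalues $\theta_0,\ldots,\theta_d$, the primitive idempotent associated with $\theta_i$ is $E_i=\prod_{j\ne i}(A-\theta_jI)/(\theta_i-\theta_j)$. Standing setup: $A,A^*$ are multiplicity-free elements of $\mathcal A$ ($A^*$ is just a name, not an adjoint); $E_0,\ldots,E_d$ is an ordering of the primitive idempotents of $A$ and $\theta_i$ is the eigenvalue of $A$ for $E_i$; $E^*_0,\ldots,E^*_d$ is an ordering of the primitive idempotents of $A^*$ and $\theta^*_i$ is the eigenvalue of $A^*$ for $E^*_i$; $V$ is an irreducible left $\mathcal A$-module. A decomposition of $V$ is a sequence $U_0,\ldots,U_d$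 of 1-dimensional subspaces with $V=U_0+\cdots+U_d$ (direct sum). Such a decomposition is split (with respect to the orderings $E_0,\ldots,E_d$ and $E^*_0,\ldots,E^*_d$) if $(A-\theta_iI)U_i=U_{i+1}$ for $0\le i\le d-1$, $(A-\theta_dI)U_d=0$, $(A^*-\theta^*_iI)U_i=U_{i-1}$ for $1\le i\le d$, and $(A^*-\theta^*_0I)U_0=0$. *)

theory Defs
  imports "HOL-Analysis.Analysis"
begin

text \<open>The algebra Mat_{d+1}(K) acting on its irreducible module V is modelled concretely:
  V = K^n with CARD('n) = d+1, elements of the algebra are n x n matrices acting by (*v).\<close>

definition is_eigval :: "'a::field^'n^'n \<Rightarrow> 'a \<Rightarrow> bool" where
  "is_eigval M c \<longleftrightarrow> (\<exists>v. v \<noteq> 0 \<and> M *v v = c *s v)"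

text \<open>theta_0..theta_d is an ordering of the eigenvalues of a multiplicity-free M
  (d+1 mutually distinct eigenvalues, all in K).\<close>
definition mf_ordering :: "'a::field^'n^'n \<Rightarrow> (nat \<Rightarrow> 'a) \<Rightarrow> nat \<Rightarrow> bool" where
  "mf_ordering M th d \<longleftrightarrow> CARD('n) = d + 1 \<and> inj_on th {..d}
     \<and> {c. is_eigval M c} = th ` {..d}"

definition prim_idem :: "'a::field^'n^'n \<Rightarrow> (nat \<Rightarrow> 'a) \<Rightarrow> nat \<Rightarrow> nat \<Rightarrow> 'a^'n^'n" where
  "prim_idem M th d i = foldr (\<lambda>j P. (if j = i then mat 1
        else mat (inverse (th i - th j)) ** (M - mat (th j))) ** P) [0..<Suc d] (mat 1)"

definition img :: "'a::field^'n^'n \<Rightarrow> ('a^'n) set" where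
  "img M = range (\<lambda>v. M *v v)"

definition is_decomposition :: "nat \<Rightarrow> (nat \<Rightarrow> ('a::field^'n) set) \<Rightarrow> bool" where
  "is_decomposition d U \<longleftrightarrow>
     (\<forall>h\<le>d. vec.subspace (U h) \<and> vec.dim (U h) = 1)
     \<and> vec.span (\<Union>h\<le>d. U h) = UNIV
     \<and> (\<forall>u. (\<forall>h\<le>d. u h \<in> U h) \<and> (\<Sum>h\<le>d. u h) = 0 \<longrightarrow> (\<forall>h\<le>d. u h = 0))"

definition is_split :: "'a::field^'n^'n \<Rightarrow> 'a^'n^'n \<Rightarrow> (nat \<Rightarrow> 'a) \<Rightarrow> (nat \<Rightarrow> 'a)
    \<Rightarrow> nat \<Rightarrow> (nat \<Rightarrow> ('a^'n) set) \<Rightarrow> bool" where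
  "is_split A As th ths d U \<longleftrightarrow> is_decomposition d U
     \<and> (\<forall>i<d. (\<lambda>v. (A - mat (th i)) *v v) ` U i = U (Suc i))
     \<and> (\<lambda>v. (A - mat (th d)) *v v) ` U d = {0}
     \<and> (\<forall>i. 1 \<le> i \<and> i \<le> d \<longrightarrow> (\<lambda>v. (As - mat (ths i)) *v v) ` U i = U (i - 1))
     \<and> (\<lambda>v. (As - mat (ths 0)) *v v) ` U 0 = {0}"

definition mpow_app :: "'a::field^'n^'n \<Rightarrow> nat \<Rightarrow> 'a^'n \<Rightarrow> 'a^'n" where
  "mpow_app M h = ((\<lambda>v. M *v v) ^^ h)"

end

theory Submission
  imports Defs
begin

text \<open>
  Choose u_0 spanning U_0 and put u_(i+1) = (A - theta_i) u_i. Then U_i is the line through u_i,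
  and in the basis u_0, ..., u_d the matrix A* is upper triangular with diagonal
  theta*_0, ..., theta*_d. For such a matrix the primitive idempotent E*_h maps V into
  span(u_0, ..., u_h) and fixes u_h modulo span(u_0, ..., u_(h-1)); this gives (ii). Since E*_0 V
  is the line through u_0 and A^h u_0 agrees with u_h modulo span(u_0, ..., u_(h-1)), (i) follows.
  Reversing the order of the decomposition and exchanging (A, theta) with (A*, theta*) gives again
  a split decomposition, whose primitive idempotents for A are the E_(d-h); so (iii) and (iv) are
  (i) and (ii) for the reversed split. Finally (v) holds for every direct decomposition into
  lines, because the spans of two subsets of a basis meet in the span of their intersection.
\<close>

lemma matrix_vector_mult_mat: "mat c *v x = c *s (x::'a::field^'n)"
  by (simp add: vec_eq_iff matrix_vector_mult_def mat_def if_distrib[where f="\<lambda>a. a * b" for b]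
      cong: if_cong)

lemma matrix_minus_mat_apply: "(M - mat t) *v x = M *v x - t *s (x::'a::field^'n)"
  by (simp add: matrix_vector_mult_diff_rdistrib matrix_vector_mult_mat)

lemma matrix_vector_mult_in_span:
  fixes M :: "'a::field^'n^'n"
  assumes "\<And>y. y \<in> S \<Longrightarrow> M *v y \<in> vec.span T" and "x \<in> vec.span S"
  shows "M *v x \<in> vec.span T"
proof -
  have "vec.span ((*v) M ` S) \<subseteq> vec.span T"
    using assms(1) by (intro vec.span_minimal) auto
  then show ?thesis
    using assms(2) by (auto simp: vec.span_image)
qed

lemma span_UN_lines:
  assumes "\<And>h. h \<in> I \<Longrightarrow> U h = vec.span {u h}"
  shows "vec.span (\<Union>h\<in>I. U h) = vec.span (u ` I)"
proof (rule antisym)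
  show "vec.span (\<Union>h\<in>I. U h) \<subseteq> vec.span (u ` I)"
  proof (intro vec.span_minimal UN_least)
    fix h assume "h \<in> I"
    then have "vec.span {u h} \<subseteq> vec.span (u ` I)"
      by (intro vec.span_mono) auto
    then show "U h \<subseteq> vec.span (u ` I)"
      using assms \<open>h \<in> I\<close> by simp
  qed simp
  show "vec.span (u ` I) \<subseteq> vec.span (\<Union>h\<in>I. U h)"
    using assms by (intro vec.span_mono) (auto intro: vec.span_base)
qed

lemma (in vector_space) span_Int_of_independent:
  assumes "independent B" "S \<subseteq> B" "T \<subseteq> B"
  shows "span S \<inter> span T = span (S \<inter> T)"
proof (rule antisym)
  show "span S \<inter> span T \<subseteq> span (S \<inter> T)"
  proof
    fix x assume x: "x \<in> span S \<inter> span T"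
    have "representation B x = representation S x" and "representation B x = representation T x"
      using x assms by (auto intro: representation_extend)
    then have supp: "{b. representation B x b \<noteq> 0} \<subseteq> S \<inter> T"
      using representation_ne_zero[of S x] representation_ne_zero[of T x] by auto
    have "x \<in> span B" using x assms(2) span_mono by blast
    then have "x = (\<Sum>b | representation B x b \<noteq> 0. representation B x b *s b)"
      using assms(1) by (simp add: sum_nonzero_representation_eq)
    also have "\<dots> \<in> span (S \<inter> T)"
      using supp by (intro span_sum span_scale span_base) auto
    finally show "x \<in> span (S \<inter> T)" .
  qed
  show "span (S \<inter> T) \<subseteq> span S \<inter> span T"
    by (simp add: span_mono)
qed

lemma (in vector_space) dim_1_subspace_span_singleton:
  assumes "subspace S" and "dim S = 1"
  obtains x where "S = span {x}"
proof -
  obtain B where B: "B \<subseteq> S" "independent B" "S \<subseteq> span B" "card B = dim S"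
    by (rule basis_exists)
  with assms(2) obtain x where "B = {x}"
    by (auto simp: card_1_singleton_iff)
  moreover have "span B = S"
    using B(1,3) assms(1) by (rule span_subspace)
  ultimately show ?thesis using that by blast
qed

lemma foldr_upt_chain:
  assumes "\<And>j x. n \<le> j \<Longrightarrow> j < m \<Longrightarrow> x \<in> S (Suc j) \<Longrightarrow> f j x \<in> S j"
    and "v \<in> S m" and "n \<le> m"
  shows "foldr f [n..<m] v \<in> S n"
  using assms(3,1)
proof (induction n rule: inc_induct)
  case base
  then show ?case using assms(2) by simp
next
  case (step n)
  then show ?case by (simp add: upt_conv_Cons)
qed

lemma foldr_rev_commuting:
  assumes "\<And>j k. f j \<circ> f k = f k \<circ> f j"
  shows "foldr f (rev xs) = foldr f xs"
  using foldr_fold[of xs f] assms by (simp add: foldr_conv_fold)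

lemma UN_atMost_reverse:
  assumes "i \<le> (d::nat)"
  shows "(\<Union>h\<le>d - i. f (d - h)) = (\<Union>h\<in>{i..d}. f h)"
proof -
  have "(\<lambda>h. d - h) ` {..d - i} = {i..d}"
  proof
    show "{i..d} \<subseteq> (\<lambda>h. d - h) ` {..d - i}"
    proof
      fix x assume "x \<in> {i..d}"
      then show "x \<in> (\<lambda>h. d - h) ` {..d - i}"
        by (intro rev_image_eqI[of "d - x"]) auto
    qed
  qed (use assms in auto)
  moreover have "(\<Union>h\<le>d - i. f (d - h)) = \<Union> (f ` (\<lambda>h. d - h) ` {..d - i})"
    by (simp add: image_image)
  ultimately show ?thesis by simp
qed

lemma inj_on_reverse_atMost:
  assumes "inj_on f {..(d::nat)}"
  shows "inj_on (\<lambda>h. f (d - h)) {..d}"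
proof (rule inj_onI)
  fix x y assume "x \<in> {..d}" "y \<in> {..d}" "f (d - x) = f (d - y)"
  then have "d - x = d - y" using assms by (auto dest: inj_onD)
  then show "x = y" using \<open>x \<in> {..d}\<close> \<open>y \<in> {..d}\<close> by simp
qed

section \<open>Primitive idempotents as products of commuting factors\<close>

definition prim_idem_factor ::
    "'a::field^'n^'n \<Rightarrow> (nat \<Rightarrow> 'a) \<Rightarrow> nat \<Rightarrow> nat \<Rightarrow> 'a^'n^'n" where
  "prim_idem_factor M th i j =
     (if j = i then mat 1 else mat (inverse (th i - th j)) ** (M - mat (th j)))"

lemma prim_idem_eq_foldr_factors:
  "prim_idem M th d i = foldr (\<lambda>j P. prim_idem_factor M th i j ** P) [0..<Suc d] (mat 1)"
  unfolding prim_idem_def prim_idem_factor_def ..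

lemma foldr_matrix_mult_apply:
  "foldr (\<lambda>j P. F j ** P) xs (mat 1) *v v = foldr (\<lambda>j. (*v) (F j)) xs (v::'a::field^'n)"
  by (induction xs) (simp_all add: matrix_vector_mul_assoc[symmetric])

lemma prim_idem_apply:
  "prim_idem M th d i *v v = foldr (\<lambda>j. (*v) (prim_idem_factor M th i j)) [0..<Suc d] v"
  unfolding prim_idem_eq_foldr_factors by (rule foldr_matrix_mult_apply)

lemma prim_idem_factor_apply:
  "prim_idem_factor M th i j *v x =
     (if j = i then x else inverse (th i - th j) *s ((M - mat (th j)) *v x))"
  by (simp add: prim_idem_factor_def matrix_vector_mul_assoc[symmetric] matrix_vector_mult_mat)

lemma affine_in_matrix_commute:
  fixes M F G :: "'a::field^'n^'n"
  assumes "\<And>x. F *v x = a *s (M *v x) + b *s x" and "\<And>x. G *v x = c *s (M *v x) + e *s x"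
  shows "F ** G = G ** F"
  unfolding matrix_eq
  by (simp add: matrix_vector_mul_assoc[symmetric] assms matrix_vector_right_distrib
      vector_scalar_commute vec_eq_iff algebra_simps)

lemma prim_idem_factor_affine:
  "\<exists>a b. \<forall>x. prim_idem_factor M th i j *v x = a *s (M *v x) + b *s (x::'a::field^'n)"
proof (cases "j = i")
  case True
  then show ?thesis by (intro exI[of _ 0] exI[of _ 1]) (simp add: prim_idem_factor_apply)
next
  case False
  let ?c = "inverse (th i - th j)"
  show ?thesis using False
    by (intro exI[of _ ?c] exI[of _ "- ?c * th j"])
      (simp add: prim_idem_factor_apply matrix_vector_mult_diff_rdistrib matrix_vector_mult_mat
        vec_eq_iff algebra_simps)
qed

lemma prim_idem_factors_commute:
  "prim_idem_factor M th i j ** prim_idem_factor M th i k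
     = prim_idem_factor M th i k ** prim_idem_factor M th i j"
  using prim_idem_factor_affine[of M th i j] prim_idem_factor_affine[of M th i k]
  by (metis affine_in_matrix_commute)

lemma prim_idem_reverse:
  assumes "h \<le> d"
  shows "prim_idem M (\<lambda>i. th (d - i)) d h = prim_idem M th d (d - h)"
proof -
  let ?F = "\<lambda>j P. prim_idem_factor M th (d - h) j ** P"
  have "prim_idem M (\<lambda>i. th (d - i)) d h = foldr (\<lambda>j. ?F (d - j)) [0..<Suc d] (mat 1)"
    unfolding prim_idem_eq_foldr_factors using assms
    by (intro foldr_cong) (auto simp: prim_idem_factor_def)
  also have "\<dots> = foldr ?F (map (\<lambda>j. d - j) [0..<Suc d]) (mat 1)"
    by (simp add: foldr_map o_def)
  also have "map (\<lambda>j. d - j) [0..<Suc d] = rev [0..<Suc d]"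
    by (rule nth_equalityI) (simp_all add: rev_nth del: upt_Suc)
  also have "foldr ?F (rev [0..<Suc d]) = foldr ?F [0..<Suc d]"
    by (rule foldr_rev_commuting) (simp add: fun_eq_iff matrix_mul_assoc prim_idem_factors_commute)
  finally show ?thesis
    by (simp add: prim_idem_eq_foldr_factors)
qed

section \<open>Primitive idempotents of a triangular matrix\<close>

definition upper_triangular ::
    "'a::field^'n^'n \<Rightarrow> (nat \<Rightarrow> 'a) \<Rightarrow> (nat \<Rightarrow> 'a^'n) \<Rightarrow> nat \<Rightarrow> bool" where
  "upper_triangular M th u d \<longleftrightarrow> (\<forall>i\<le>d. M *v u i - th i *s u i \<in> vec.span (u ` {..<i}))"

context
  fixes M :: "'a::field^'n^'n" and th u d
  assumes tri: "upper_triangular M th u d"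
begin

lemma upper_triangular_flag_invariant:
  assumes "k \<le> Suc d" and "x \<in> vec.span (u ` {..<k})"
  shows "(M - mat t) *v x \<in> vec.span (u ` {..<k})"
proof (rule matrix_vector_mult_in_span[OF _ assms(2)])
  fix y assume "y \<in> u ` {..<k}"
  then obtain h where h: "h < k" "y = u h" by auto
  have "M *v u h - th h *s u h \<in> vec.span (u ` {..<h})"
    using tri h assms(1) by (simp add: upper_triangular_def)
  also have "\<dots> \<subseteq> vec.span (u ` {..<k})"
    using h by (intro vec.span_mono) auto
  finally have "(th h - t) *s u h + (M *v u h - th h *s u h) \<in> vec.span (u ` {..<k})"
    using h by (intro vec.span_add vec.span_scale) (auto intro: vec.span_base)
  also have "(th h - t) *s u h + (M *v u h - th h *s u h) = (M - mat t) *v y"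
    unfolding h(2) matrix_minus_mat_apply by (simp add: vec.scale_left_diff_distrib)
  finally show "(M - mat t) *v y \<in> vec.span (u ` {..<k})" .
qed

lemma upper_triangular_flag_step:
  assumes "k \<le> d" and "x \<in> vec.span (u ` {..k})"
  shows "(M - mat (th k)) *v x \<in> vec.span (u ` {..<k})"
proof (rule matrix_vector_mult_in_span[OF _ assms(2)])
  fix y assume "y \<in> u ` {..k}"
  then obtain h where h: "h \<le> k" "y = u h" by auto
  show "(M - mat (th k)) *v y \<in> vec.span (u ` {..<k})"
  proof (cases "h = k")
    case True
    then show ?thesis
      using tri assms(1) h by (simp add: upper_triangular_def matrix_minus_mat_apply)
  next
    case False
    then have "y \<in> vec.span (u ` {..<k})"
      using h by (intro vec.span_base) auto
    then show ?thesis
      using assms(1) by (intro upper_triangular_flag_invariant) auto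
  qed
qed

lemma img_prim_idem_subset:
  assumes "vec.span (u ` {..d}) = UNIV" and "h \<le> d"
  shows "img (prim_idem M th d h) \<subseteq> vec.span (u ` {..h})"
proof
  fix y assume "y \<in> img (prim_idem M th d h)"
  then obtain v where y: "y = prim_idem M th d h *v v" by (auto simp: img_def)
  \<comment> \<open>Factors with j > h lower the flag by one step, the others preserve span(u_0, ..., u_h).\<close>
  define S where "S n = vec.span (u ` {..<max n (Suc h)})" for n
  have "foldr (\<lambda>j. (*v) (prim_idem_factor M th h j)) [0..<Suc d] v \<in> S 0"
  proof (rule foldr_upt_chain)
    fix j x assume j: "j < Suc d" and x: "x \<in> S (Suc j)"
    consider "h < j" | "j = h" | "j < h" by linarith
    then show "prim_idem_factor M th h j *v x \<in> S j"
    proof cases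
      case 1
      then have "max (Suc j) (Suc h) = Suc j" and "max j (Suc h) = j" by auto
      then have "S (Suc j) = vec.span (u ` {..j})" and "S j = vec.span (u ` {..<j})"
        by (simp_all add: S_def lessThan_Suc_atMost)
      then show ?thesis
        using 1 j x by (simp add: prim_idem_factor_apply vec.span_scale upper_triangular_flag_step)
    next
      case 2
      then show ?thesis using x by (simp add: S_def prim_idem_factor_apply)
    next
      case 3
      then show ?thesis
        using x assms(2)
        by (simp add: S_def prim_idem_factor_apply max_def vec.span_scale upper_triangular_flag_invariant)
    qed
  next
    show "v \<in> S (Suc d)"
      using assms by (simp add: S_def lessThan_Suc_atMost)
  qed simp
  then show "y \<in> vec.span (u ` {..h})"
    by (simp add: y prim_idem_apply S_def lessThan_Suc_atMost)
qed

lemma prim_idem_apply_diagonal: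
  assumes "inj_on th {..d}" and "h \<le> d"
  shows "prim_idem M th d h *v u h - u h \<in> vec.span (u ` {..<h})"
proof -
  let ?F = "vec.span (u ` {..<h})"
  have "foldr (\<lambda>j. (*v) (prim_idem_factor M th h j)) [0..<Suc d] (u h) \<in> {x. x - u h \<in> ?F}"
  proof (rule foldr_upt_chain)
    fix j x assume j: "j < Suc d" and x: "x \<in> {x. x - u h \<in> ?F}"
    show "prim_idem_factor M th h j *v x \<in> {x. x - u h \<in> ?F}"
    proof (cases "j = h")
      case False
      define c where "c = inverse (th h - th j)"
      have "th h \<noteq> th j" using False assms j by (auto dest: inj_onD)
      then have c: "c * (th h - th j) = 1" by (simp add: c_def)
      have "c *s ((M - mat (th j)) *v x) - u h
          = c *s ((M - mat (th j)) *v (x - u h)) + c *s (M *v u h - th h *s u h)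
            + (c * (th h - th j) - 1) *s u h"
        by (simp add: vec_eq_iff matrix_minus_mat_apply matrix_vector_mult_mat algebra_simps)
      also have "\<dots> = c *s ((M - mat (th j)) *v (x - u h)) + c *s (M *v u h - th h *s u h)"
        by (simp add: c)
      also have "\<dots> \<in> ?F"
        using x tri assms(2) by (intro vec.span_add vec.span_scale upper_triangular_flag_invariant)
          (auto simp: upper_triangular_def)
      finally show ?thesis using False by (simp add: prim_idem_factor_apply c_def)
    qed (use x in \<open>simp add: prim_idem_factor_apply\<close>)
  qed (simp_all add: vec.span_zero)
  then show ?thesis by (simp add: prim_idem_apply)
qed

lemma span_UN_img_prim_idem:
  assumes "vec.span (u ` {..d}) = UNIV" and "inj_on th {..d}" and "i \<le> d"
  shows "vec.span (\<Union>h\<le>i. img (prim_idem M th d h)) = vec.span (u ` {..i})"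
proof (rule antisym)
  have "img (prim_idem M th d h) \<subseteq> vec.span (u ` {..i})" if "h \<le> i" for h
  proof -
    have "vec.span (u ` {..h}) \<subseteq> vec.span (u ` {..i})"
      using that by (intro vec.span_mono) auto
    then show ?thesis
      using img_prim_idem_subset[OF assms(1), of h] that assms(3) by auto
  qed
  then show "vec.span (\<Union>h\<le>i. img (prim_idem M th d h)) \<subseteq> vec.span (u ` {..i})"
    by (intro vec.span_minimal) auto
  have "vec.span (u ` {..<k}) \<subseteq> vec.span (\<Union>h<k. img (prim_idem M th d h))" if "k \<le> Suc d" for k
    using that
  proof (induction k)
    case (Suc k)
    let ?L = "vec.span (\<Union>h<Suc k. img (prim_idem M th d h))"
    have "vec.span (\<Union>h<k. img (prim_idem M th d h)) \<subseteq> ?L"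
      by (intro vec.span_mono UN_mono) simp_all
    then have "vec.span (u ` {..<k}) \<subseteq> ?L"
      using Suc by auto
    then have near: "prim_idem M th d k *v u k - u k \<in> ?L"
      using prim_idem_apply_diagonal[OF assms(2), of k] Suc.prems by auto
    have "prim_idem M th d k *v u k \<in> ?L"
      by (intro vec.span_base UN_I[of k]) (auto simp: img_def)
    from vec.span_diff[OF this near] have "u k \<in> ?L" by simp
    moreover have "u ` {..<k} \<subseteq> ?L"
      using vec.span_superset \<open>vec.span (u ` {..<k}) \<subseteq> ?L\<close> by (rule order_trans)
    ultimately show ?case
      by (intro vec.span_minimal) (auto simp: lessThan_Suc)
  qed (simp add: vec.span_zero)
  from this[of "Suc i"] assms(3)
  show "vec.span (u ` {..i}) \<subseteq> vec.span (\<Union>h\<le>i. img (prim_idem M th d h))"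
    by (simp add: lessThan_Suc_atMost)
qed

lemma img_prim_idem_0:
  assumes "vec.span (u ` {..d}) = UNIV" and "inj_on th {..d}"
  shows "img (prim_idem M th d 0) = vec.span {u 0}"
proof (rule antisym)
  show "img (prim_idem M th d 0) \<subseteq> vec.span {u 0}"
    using img_prim_idem_subset[OF assms(1), of 0] by simp
  have "prim_idem M th d 0 *v u 0 = u 0"
    using prim_idem_apply_diagonal[OF assms(2), of 0] by simp
  then have "u 0 \<in> img (prim_idem M th d 0)"
    unfolding img_def by (metis rangeI)
  moreover have "vec.subspace (img (prim_idem M th d 0))"
    unfolding img_def by (intro vec.subspace_image vec.subspace_UNIV)
  ultimately show "vec.span {u 0} \<subseteq> img (prim_idem M th d 0)"
    by (intro vec.span_minimal) auto
qed

end

section \<open>Orbits under a shift\<close>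

lemma mpow_app_Suc: "mpow_app M (Suc h) x = M *v mpow_app M h x"
  by (simp add: mpow_app_def)

lemma mpow_app_scale: "mpow_app M h (c *s x) = c *s mpow_app M h (x::'a::field^'n)"
  by (induction h) (simp_all add: mpow_app_def vector_scalar_commute)

lemma mpow_app_image_span_singleton:
  "mpow_app M h ` vec.span {x} = vec.span {mpow_app M h (x::'a::field^'n)}"
  unfolding vec.span_singleton image_image mpow_app_scale ..

lemma matrix_vector_mult_span_mpow_app:
  assumes "x \<in> vec.span ((\<lambda>h. mpow_app M h v) ` {..i})"
  shows "M *v x \<in> vec.span ((\<lambda>h. mpow_app M h v) ` {..Suc i})"
proof (rule matrix_vector_mult_in_span[OF _ assms])
  fix y assume "y \<in> (\<lambda>h. mpow_app M h v) ` {..i}"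
  then show "M *v y \<in> vec.span ((\<lambda>h. mpow_app M h v) ` {..Suc i})"
    by (auto simp flip: mpow_app_Suc intro: vec.span_base)
qed

lemma matrix_vector_mult_span_shift:
  fixes M :: "'a::field^'n^'n"
  assumes shift: "\<And>h. h \<le> i \<Longrightarrow> vec.span {(M - mat (t h)) *v u h} = vec.span {u (Suc h)}"
    and "x \<in> vec.span (u ` {..i})"
  shows "M *v x \<in> vec.span (u ` {..Suc i})"
proof (rule matrix_vector_mult_in_span[OF _ assms(2)])
  fix y assume "y \<in> u ` {..i}"
  then obtain h where h: "h \<le> i" "y = u h" by auto
  have "(M - mat (t h)) *v u h \<in> vec.span {u (Suc h)}"
    using shift[OF h(1)] vec.span_base[of _ "{(M - mat (t h)) *v u h}"] by auto
  also have "\<dots> \<subseteq> vec.span (u ` {..Suc i})"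
    using h(1) by (intro vec.span_mono) auto
  finally have "t h *s u h + (M - mat (t h)) *v u h \<in> vec.span (u ` {..Suc i})"
    using h(1) by (intro vec.span_add vec.span_scale) (auto intro: vec.span_base)
  then show "M *v y \<in> vec.span (u ` {..Suc i})"
    by (simp add: h(2) matrix_minus_mat_apply)
qed

lemma span_mpow_app_orbit:
  fixes M :: "'a::field^'n^'n"
  assumes "\<And>h. h < i \<Longrightarrow> vec.span {(M - mat (t h)) *v u h} = vec.span {u (Suc h)}"
  shows "vec.span ((\<lambda>h. mpow_app M h (u 0)) ` {..i}) = vec.span (u ` {..i})"
  using assms
proof (induction i)
  case 0
  then show ?case by (simp add: mpow_app_def)
next
  case (Suc i)
  let ?p = "\<lambda>h. mpow_app M h (u 0)"
  have IH: "vec.span (?p ` {..i}) = vec.span (u ` {..i})"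
    using Suc by simp
  have "?p ` {..i} \<subseteq> vec.span (u ` {..i})"
    using vec.span_superset[of "?p ` {..i}"] by (simp add: IH)
  also have "\<dots> \<subseteq> vec.span (u ` {..Suc i})"
    by (intro vec.span_mono image_mono) auto
  finally have p_in: "?p ` {..i} \<subseteq> vec.span (u ` {..Suc i})" .
  have "u ` {..i} \<subseteq> vec.span (?p ` {..i})"
    using vec.span_superset[of "u ` {..i}"] by (simp add: IH)
  also have "\<dots> \<subseteq> vec.span (?p ` {..Suc i})"
    by (intro vec.span_mono image_mono) auto
  finally have u_in: "u ` {..i} \<subseteq> vec.span (?p ` {..Suc i})" .
  show ?case
  proof (rule antisym)
    have "?p i \<in> vec.span (u ` {..i})"
      using IH by (auto intro: vec.span_base)
    then have "?p (Suc i) \<in> vec.span (u ` {..Suc i})"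
      unfolding mpow_app_Suc using Suc.prems by (intro matrix_vector_mult_span_shift[where t = t]) auto
    with p_in show "vec.span (?p ` {..Suc i}) \<subseteq> vec.span (u ` {..Suc i})"
      by (intro vec.span_minimal) (auto simp: atMost_Suc)
    have "u i \<in> vec.span (?p ` {..i})"
      using IH by (auto intro: vec.span_base)
    then have "M *v u i - t i *s u i \<in> vec.span (?p ` {..Suc i})"
      using u_in by (auto intro: vec.span_diff vec.span_scale matrix_vector_mult_span_mpow_app)
    then have "vec.span {M *v u i - t i *s u i} \<subseteq> vec.span (?p ` {..Suc i})"
      by (intro vec.span_minimal) auto
    moreover have "u (Suc i) \<in> vec.span {M *v u i - t i *s u i}"
      using Suc.prems[of i] vec.span_base[of "u (Suc i)" "{u (Suc i)}"]
      by (simp add: matrix_minus_mat_apply)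
    ultimately have "u (Suc i) \<in> vec.span (?p ` {..Suc i})" by blast
    with u_in show "vec.span (u ` {..Suc i}) \<subseteq> vec.span (?p ` {..Suc i})"
      by (intro vec.span_minimal) (auto simp: atMost_Suc)
  qed
qed

section \<open>Decompositions and split decompositions\<close>

lemma decomposition_lines_independent:
  assumes "is_decomposition d U" and lines: "\<And>h. h \<le> d \<Longrightarrow> U h = vec.span {u h}"
  shows "inj_on u {..d}" and "vec.independent (u ` {..d})"
proof -
  have direct: "\<And>w. (\<And>h. h \<le> d \<Longrightarrow> w h \<in> U h) \<Longrightarrow> (\<Sum>h\<le>d. w h) = 0 \<Longrightarrow> \<forall>h\<le>d. w h = 0"
    using assms(1) by (auto simp: is_decomposition_def)
  have nonzero: "u h \<noteq> 0" if "h \<le> d" for h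
    using assms(1) lines[OF that] that by (auto simp: is_decomposition_def)
  have scaled: "c *s u h \<in> U h" if "h \<le> d" for c h
    using lines[OF that] by (auto intro: vec.span_scale vec.span_base)
  show inj: "inj_on u {..d}"
  proof (rule inj_onI, rule ccontr)
    fix h k assume hk: "h \<in> {..d}" "k \<in> {..d}" "u h = u k" "h \<noteq> k"
    let ?w = "\<lambda>l. (if l = h then 1 else if l = k then - 1 else 0) *s u l"
    have "(\<Sum>l\<le>d. ?w l) = u h - u k"
      using hk by (simp add: if_distrib[of "\<lambda>c. c *s _"] sum.If_cases Int_absorb1 insert_Diff_if)
    also have "\<dots> = 0"
      using hk(3) by simp
    finally have "\<forall>l\<le>d. ?w l = 0"
      by (intro direct scaled)
    moreover have "h \<le> d" using hk(1) by simp
    ultimately have "?w h = 0" by blast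
    then show False using nonzero \<open>h \<le> d\<close> by simp
  qed
  show "vec.independent (u ` {..d})"
  proof (rule ccontr)
    assume "\<not> vec.independent (u ` {..d})"
    then obtain c v where c: "(\<Sum>v\<in>u ` {..d}. c v *s v) = 0" and v: "v \<in> u ` {..d}" "c v \<noteq> 0"
      unfolding vec.dependent_finite[OF finite_imageI[OF finite_atMost]] by blast
    have "(\<Sum>h\<le>d. c (u h) *s u h) = 0"
      using c by (simp add: sum.reindex[OF inj])
    then have "\<forall>h\<le>d. c (u h) *s u h = 0"
      by (intro direct scaled)
    then show False using v nonzero by auto
  qed
qed

lemma decomposition_segments_Int:
  assumes "is_decomposition d U" and "i \<le> d"
  shows "U i = vec.span (\<Union>h\<le>i. U h) \<inter> vec.span (\<Union>h\<in>{i..d}. U h)"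
proof -
  have "\<forall>h\<in>{..d}. \<exists>x. U h = vec.span {x}"
  proof
    fix h assume "h \<in> {..d}"
    have "vec.subspace (U h)" and "vec.dim (U h) = 1"
      using assms(1) \<open>h \<in> {..d}\<close> by (auto simp: is_decomposition_def)
    then obtain x where "U h = vec.span {x}"
      by (rule vec.dim_1_subspace_span_singleton)
    then show "\<exists>x. U h = vec.span {x}" ..
  qed
  from bchoice[OF this] obtain u where "\<forall>h\<in>{..d}. U h = vec.span {u h}"
    by blast
  then have lines: "\<And>h. h \<le> d \<Longrightarrow> U h = vec.span {u h}" by simp
  note indep = decomposition_lines_independent[OF assms(1) lines]
  have "vec.span (\<Union>h\<le>i. U h) = vec.span (u ` {..i})"
    and "vec.span (\<Union>h\<in>{i..d}. U h) = vec.span (u ` {i..d})"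
    using assms(2) by (rule_tac span_UN_lines, simp add: lines)+
  then have "vec.span (\<Union>h\<le>i. U h) \<inter> vec.span (\<Union>h\<in>{i..d}. U h)
      = vec.span (u ` {..i}) \<inter> vec.span (u ` {i..d})"
    by simp
  also have "\<dots> = vec.span (u ` {..i} \<inter> u ` {i..d})"
    using indep(2) assms(2) by (intro vec.span_Int_of_independent) auto
  also have "u ` {..i} \<inter> u ` {i..d} = {u i}"
    using inj_on_image_Int[OF indep(1), of "{..i}" "{i..d}"] assms(2) by auto
  finally show ?thesis using lines[OF assms(2)] by simp
qed

lemma is_decomposition_reverse:
  assumes "is_decomposition d U"
  shows "is_decomposition d (\<lambda>h. U (d - h))"
  unfolding is_decomposition_def
proof (intro conjI)
  show "\<forall>h\<le>d. vec.subspace (U (d - h)) \<and> vec.dim (U (d - h)) = 1"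
    using assms by (simp add: is_decomposition_def)
  show "vec.span (\<Union>h\<le>d. U (d - h)) = UNIV"
    using assms UN_atMost_reverse[of 0 d U] by (simp add: is_decomposition_def atLeast0AtMost)
  show "\<forall>w. (\<forall>h\<le>d. w h \<in> U (d - h)) \<and> (\<Sum>h\<le>d. w h) = 0 \<longrightarrow> (\<forall>h\<le>d. w h = 0)"
  proof (intro allI impI)
    fix w h assume w: "(\<forall>h\<le>d. w h \<in> U (d - h)) \<and> (\<Sum>h\<le>d. w h) = 0" and h: "h \<le> d"
    let ?v = "\<lambda>h. w (d - h)"
    have direct: "\<forall>v. (\<forall>h\<le>d. v h \<in> U h) \<and> (\<Sum>h\<le>d. v h) = 0 \<longrightarrow> (\<forall>h\<le>d. v h = 0)"
      using assms by (simp add: is_decomposition_def)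
    have v_in: "\<forall>h\<le>d. ?v h \<in> U h"
    proof (intro allI impI)
      fix h assume "h \<le> d"
      from w have "w (d - h) \<in> U (d - (d - h))"
        using diff_le_self by blast
      with \<open>h \<le> d\<close> show "?v h \<in> U h" by simp
    qed
    have "(\<Sum>h\<le>d. ?v h) = 0"
      using sum.atLeastAtMost_rev[of w 0 d] w by (simp add: atLeast0AtMost)
    with v_in have "\<forall>h\<le>d. ?v h = 0"
      using spec[OF direct, of ?v] by blast
    then have "?v (d - h) = 0"
      using diff_le_self by blast
    with h show "w h = 0" by simp
  qed
qed

lemma split_cyclic_basis:
  assumes "is_split A As th ths d U"
  obtains u where "\<And>h. h \<le> d \<Longrightarrow> U h = vec.span {u h}"
    and "\<And>h. h < d \<Longrightarrow> u (Suc h) = (A - mat (th h)) *v u h"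
proof -
  have "vec.subspace (U 0)" and "vec.dim (U 0) = 1"
    using assms by (auto simp: is_split_def is_decomposition_def)
  then obtain u0 where U0: "U 0 = vec.span {u0}"
    by (rule vec.dim_1_subspace_span_singleton)
  have step: "\<forall>h<d. (*v) (A - mat (th h)) ` U h = U (Suc h)"
    using assms by (simp add: is_split_def)
  define u where "u = rec_nat u0 (\<lambda>h x. (A - mat (th h)) *v x)"
  have "U h = vec.span {u h}" if "h \<le> d" for h
    using that
  proof (induction h)
    case (Suc h)
    have "U (Suc h) = (*v) (A - mat (th h)) ` U h"
      using step Suc.prems by simp
    also have "\<dots> = vec.span {u (Suc h)}"
      using Suc by (simp add: u_def vec.span_image[symmetric])
    finally show ?case .
  qed (simp add: U0 u_def)
  moreover have "u (Suc h) = (A - mat (th h)) *v u h" for h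
    by (simp add: u_def)
  ultimately show ?thesis using that by blast
qed

lemma split_upper_triangular:
  assumes "is_split A As th ths d U" and lines: "\<And>h. h \<le> d \<Longrightarrow> U h = vec.span {u h}"
  shows "upper_triangular As ths u d"
  unfolding upper_triangular_def
proof (intro allI impI)
  fix i assume i: "i \<le> d"
  have "(As - mat (ths i)) *v u i \<in> (*v) (As - mat (ths i)) ` U i"
    using lines[OF i] by (auto intro: vec.span_base)
  moreover have "(*v) (As - mat (ths i)) ` U i \<subseteq> vec.span (u ` {..<i})"
  proof (cases i)
    case 0
    then show ?thesis using assms(1) by (simp add: is_split_def vec.span_zero)
  next
    case (Suc h)
    then have "(*v) (As - mat (ths i)) ` U i = vec.span {u h}"
      using assms(1) lines[of h] i by (simp add: is_split_def)
    also have "\<dots> \<subseteq> vec.span (u ` {..<i})"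
      using Suc by (intro vec.span_mono) auto
    finally show ?thesis .
  qed
  ultimately show "As *v u i - ths i *s u i \<in> vec.span (u ` {..<i})"
    by (auto simp: matrix_minus_mat_apply)
qed

lemma is_split_reverse:
  assumes "is_split A As th ths d U"
  shows "is_split As A (\<lambda>i. ths (d - i)) (\<lambda>i. th (d - i)) d (\<lambda>i. U (d - i))"
proof -
  from assms have dec: "is_decomposition d U"
    and stepA: "\<forall>i<d. (*v) (A - mat (th i)) ` U i = U (Suc i)"
    and endA: "(*v) (A - mat (th d)) ` U d = {0}"
    and stepAs: "\<forall>i. 1 \<le> i \<and> i \<le> d \<longrightarrow> (*v) (As - mat (ths i)) ` U i = U (i - 1)"
    and endAs: "(*v) (As - mat (ths 0)) ` U 0 = {0}"
    by (simp_all add: is_split_def)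
  have "(*v) (As - mat (ths (d - i))) ` U (d - i) = U (d - Suc i)" if "i < d" for i
    using stepAs that by (simp add: Suc_diff_Suc)
  moreover have "(*v) (A - mat (th (d - i))) ` U (d - i) = U (d - (i - 1))" if "1 \<le> i" "i \<le> d" for i
    using stepA that by (simp add: Suc_diff_le)
  ultimately show ?thesis
    using is_decomposition_reverse[OF dec] endA endAs by (simp add: is_split_def)
qed

lemma split_initial_sums:
  fixes A As :: "'a::field^'n^'n"
  assumes split: "is_split A As th ths d U" and inj: "inj_on ths {..d}" and "i \<le> d"
  shows "vec.span (\<Union>h\<le>i. U h) = vec.span (\<Union>h\<le>i. mpow_app A h ` img (prim_idem As ths d 0))"
    and "vec.span (\<Union>h\<le>i. U h) = vec.span (\<Union>h\<le>i. img (prim_idem As ths d h))"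
proof -
  obtain u where lines: "\<And>h. h \<le> d \<Longrightarrow> U h = vec.span {u h}"
    and shift: "\<And>h. h < d \<Longrightarrow> u (Suc h) = (A - mat (th h)) *v u h"
    using split_cyclic_basis[OF split] by blast
  have tri: "upper_triangular As ths u d"
    using split lines by (rule split_upper_triangular)
  have "vec.span (u ` {..d}) = vec.span (\<Union>h\<le>d. U h)"
    using lines by (simp add: span_UN_lines)
  also have "\<dots> = UNIV"
    using split by (simp add: is_split_def is_decomposition_def)
  finally have spanning: "vec.span (u ` {..d}) = UNIV" .
  have lhs: "vec.span (\<Union>h\<le>i. U h) = vec.span (u ` {..i})"
    using lines \<open>i \<le> d\<close> by (intro span_UN_lines) simp
  have "(\<Union>h\<le>i. mpow_app A h ` img (prim_idem As ths d 0)) = (\<Union>h\<le>i. vec.span {mpow_app A h (u 0)})"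
    by (simp add: img_prim_idem_0[OF tri spanning inj] mpow_app_image_span_singleton)
  moreover have "vec.span ((\<lambda>h. mpow_app A h (u 0)) ` {..i}) = vec.span (u ` {..i})"
    using shift \<open>i \<le> d\<close> by (intro span_mpow_app_orbit[where t = th]) simp
  ultimately show "vec.span (\<Union>h\<le>i. U h) = vec.span (\<Union>h\<le>i. mpow_app A h ` img (prim_idem As ths d 0))"
    using lhs by (simp add: span_UN_lines)
  show "vec.span (\<Union>h\<le>i. U h) = vec.span (\<Union>h\<le>i. img (prim_idem As ths d h))"
    using lhs span_UN_img_prim_idem[OF tri spanning inj \<open>i \<le> d\<close>] by simp
qed

lemma split_final_sums:
  fixes A As :: "'a::field^'n^'n"
  assumes split: "is_split A As th ths d U" and inj: "inj_on th {..d}" and i: "i \<le> d"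
  shows "vec.span (\<Union>h\<in>{i..d}. U h) = vec.span (\<Union>h\<le>d - i. mpow_app As h ` img (prim_idem A th d d))"
    and "vec.span (\<Union>h\<in>{i..d}. U h) = vec.span (\<Union>h\<in>{i..d}. img (prim_idem A th d h))"
proof -
  note reversed = split_initial_sums[OF is_split_reverse[OF split] inj_on_reverse_atMost[OF inj], of "d - i"]
  have E_rev: "prim_idem A (\<lambda>h. th (d - h)) d h = prim_idem A th d (d - h)" if "h \<le> d" for h
    using that by (rule prim_idem_reverse)
  have "(\<Union>h\<le>d - i. U (d - h)) = (\<Union>h\<in>{i..d}. U h)"
    and "(\<Union>h\<le>d - i. img (prim_idem A (\<lambda>h. th (d - h)) d h)) = (\<Union>h\<in>{i..d}. img (prim_idem A th d h))"
    using UN_atMost_reverse[OF i, of U] UN_atMost_reverse[OF i, of "\<lambda>h. img (prim_idem A th d h)"] i E_rev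
    by simp_all
  with reversed E_rev[of 0]
  show "vec.span (\<Union>h\<in>{i..d}. U h) = vec.span (\<Union>h\<le>d - i. mpow_app As h ` img (prim_idem A th d d))"
    and "vec.span (\<Union>h\<in>{i..d}. U h) = vec.span (\<Union>h\<in>{i..d}. img (prim_idem A th d h))"
    by simp_all
qed

theorem lemma2p4:
  fixes A As :: "'a::field^'n^'n" and th ths :: "nat \<Rightarrow> 'a" and d :: nat
    and U :: "nat \<Rightarrow> ('a^'n) set"
  assumes "mf_ordering A th d" and "mf_ordering As ths d"
    and "is_split A As th ths d U"
  defines "E \<equiv> prim_idem A th d" and "Es \<equiv> prim_idem As ths d"
  shows "\<forall>i\<le>d.
      vec.span (\<Union>h\<le>i. U h) = vec.span (\<Union>h\<le>i. mpow_app A h ` img (Es 0))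
    \<and> vec.span (\<Union>h\<le>i. U h) = vec.span (\<Union>h\<le>i. img (Es h))
    \<and> vec.span (\<Union>h\<in>{i..d}. U h) = vec.span (\<Union>h\<le>d - i. mpow_app As h ` img (E d))
    \<and> vec.span (\<Union>h\<in>{i..d}. U h) = vec.span (\<Union>h\<in>{i..d}. img (E h))
    \<and> U i = vec.span (\<Union>h\<le>i. img (Es h)) \<inter> vec.span (\<Union>h\<in>{i..d}. img (E h))"
proof (intro allI impI)
  fix i assume i: "i \<le> d"
  have inj: "inj_on th {..d}" "inj_on ths {..d}"
    using assms(1,2) by (simp_all add: mf_ordering_def)
  note initial = split_initial_sums[OF assms(3) inj(2) i, folded Es_def]
  note final = split_final_sums[OF assms(3) inj(1) i, folded E_def]
  have "is_decomposition d U"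
    using assms(3) by (simp add: is_split_def)
  from decomposition_segments_Int[OF this i]
  have segments: "U i = vec.span (\<Union>h\<le>i. img (Es h)) \<inter> vec.span (\<Union>h\<in>{i..d}. img (E h))"
    unfolding initial(2) final(2) .
  show "vec.span (\<Union>h\<le>i. U h) = vec.span (\<Union>h\<le>i. mpow_app A h ` img (Es 0))
    \<and> vec.span (\<Union>h\<le>i. U h) = vec.span (\<Union>h\<le>i. img (Es h))
    \<and> vec.span (\<Union>h\<in>{i..d}. U h) = vec.span (\<Union>h\<le>d - i. mpow_app As h ` img (E d))
    \<and> vec.span (\<Union>h\<in>{i..d}. U h) = vec.span (\<Union>h\<in>{i..d}. img (E h))
    \<and> U i = vec.span (\<Union>h\<le>i. img (Es h)) \<inter> vec.span (\<Union>h\<in>{i..d}. img (E h))"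
    by (intro conjI initial final segments)
qed

end
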